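(* Under the standing assumptions stated in the context, $\lim_{\beta\to\infty}\mu_\beta(\check{\mathcal S}(0))/\mu_\beta(\mathcal S)=1$, where $\check{\mathcal S}(0)=\{\sigma\in\mathcal S:\mathrm{supp}[\sigma]\cap B_{L_\beta,L_\beta}(0)=\emptyset\}$.
   Context: Kawasaki setting. Fix $U>0$ and $\Delta$ with $U<\Delta<2U$ and $U/(2U-\Delta)\notin\mathbb N$; $\ell_c=\lceil U/(2U-\Delta)\rceil$. $\Lambda_\beta\subset\mathbb Z^2$: square box of odd side length centred at the origin with periodic boundary conditions. $\rho_\beta=e^{-\beta\Delta}$, $n_\beta=\lceil\rho_\beta|\Lambda_\beta|\rceil$. Assume $|\Lambda_\beta|\rho_\beta\to\infty$ and $|\Lambda_\beta|e^{-\beta\Gamma}\to0$, where $\Gamma=-U\,b+\Delta[\ell_c(\ell_c-1)+2]$ and $b$ is the number of nearest-neighbour pairs inside a proto-critical droplet (a set of $\ell_c(\ell_c-1)+1$ sites forming either an $(\ell_c-2)\times(\ell_c-2)$ square with four bars on its sides of total length $3\ell_c-3$, or an $(\ell_c-1)\times(\ell_c-3)$ rectangle with four bars of total length $3\ell_c-2$). $\mathcal X_\beta^{(m)}=\{\sigma\in\{0,1\}^{\Lambda_\beta}:|\mathrm{supp}[\sigma]|=m\}$. $H_\beta(\sigma)=-U\sum_{\{x,y\}}\sigma(x)\sigma(y)$ (unordered nearest-neighbour pairs); canonical Gibbs measure $\mu_\beta=e^{-\beta H_\beta}/Z_\beta^{(n_\beta)}$ on $\mathcal X_\beta^{(n_\beta)}$.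 $L_\beta$ odd with $L_\beta^2=e^{(\Delta-\delta_\beta)\beta}$, $\delta_\beta\to0$, $\beta\delta_\beta\to\infty$; $B_{L,L}(x)$: square box of side $L$ centred at $x$. $\mathcal S=\{\sigma\in\mathcal X_\beta^{(n_\beta)}:|\mathrm{supp}[\sigma]\cap B_{L_\beta,L_\beta}(x)|\le\ell_c(\ell_c-1)+1\ \forall x\in\Lambda_\beta\}$. *)

theory Defs
  imports Complex_Main
begin

type_synonym site = "int \<times> int"
type_synonym config = "site \<Rightarrow> nat"

definition ell_c :: "real \<Rightarrow> real \<Rightarrow> nat" where
  "ell_c U D = nat \<lceil>U / (2*U - D)\<rceil>"

text \<open>Number of nearest-neighbour pairs inside a proto-critical droplet
  (both shapes): (l-1)^2 + l(l-2) + 1 = 2(l-1)^2.\<close>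
definition b_pc :: "nat \<Rightarrow> real" where
  "b_pc l = (real l - 1)^2 + real l * (real l - 2) + 1"

definition Gamma :: "real \<Rightarrow> real \<Rightarrow> real" where
  "Gamma U D = - U * b_pc (ell_c U D)
     + D * (real (ell_c U D) * (real (ell_c U D) - 1) + 2)"

text \<open>Torus of odd side length N centred at the origin.\<close>
definition half :: "nat \<Rightarrow> int" where
  "half N = (int N - 1) div 2"

definition Lam :: "nat \<Rightarrow> site set" where
  "Lam N = {- half N .. half N} \<times> {- half N .. half N}"

definition cadj :: "nat \<Rightarrow> int \<Rightarrow> int \<Rightarrow> bool" where
  "cadj N a b \<longleftrightarrow> (a - b) mod int N = 1 \<or> (b - a) mod int N = 1"

definition tadj :: "nat \<Rightarrow> site \<Rightarrow> site \<Rightarrow> bool" where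
  "tadj N x y \<longleftrightarrow> x \<noteq> y \<and>
     ((cadj N (fst x) (fst y) \<and> snd x = snd y) \<or> (fst x = fst y \<and> cadj N (snd x) (snd y)))"

definition nn_pairs :: "nat \<Rightarrow> site set set" where
  "nn_pairs N = {{x, y} | x y. x \<in> Lam N \<and> y \<in> Lam N \<and> tadj N x y}"

definition tdist :: "nat \<Rightarrow> int \<Rightarrow> int \<Rightarrow> int" where
  "tdist N a b = min ((a - b) mod int N) ((b - a) mod int N)"

definition box :: "nat \<Rightarrow> nat \<Rightarrow> site \<Rightarrow> site set" where
  "box N L x = {y \<in> Lam N. tdist N (fst x) (fst y) \<le> (int L - 1) div 2
                          \<and> tdist N (snd x) (snd y) \<le> (int L - 1) div 2}"

definition supp :: "nat \<Rightarrow> config \<Rightarrow> site set" where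
  "supp N \<sigma> = {x \<in> Lam N. \<sigma> x = 1}"

definition Xm :: "nat \<Rightarrow> nat \<Rightarrow> config set" where
  "Xm N m = {\<sigma>. (\<forall>x. \<sigma> x \<in> {0, 1}) \<and> (\<forall>x. x \<notin> Lam N \<longrightarrow> \<sigma> x = 0)
               \<and> card (supp N \<sigma>) = m}"

definition Ham :: "real \<Rightarrow> nat \<Rightarrow> config \<Rightarrow> real" where
  "Ham U N \<sigma> = - U * (\<Sum>p\<in>nn_pairs N. \<Prod>x\<in>p. real (\<sigma> x))"

definition n_part :: "real \<Rightarrow> nat \<Rightarrow> real \<Rightarrow> nat" where
  "n_part D N \<beta> = nat \<lceil>exp (- \<beta> * D) * real (card (Lam N))\<rceil>"

definition gibbs :: "real \<Rightarrow> real \<Rightarrow> nat \<Rightarrow> real \<Rightarrow> config set \<Rightarrow> real" where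
  "gibbs U D N \<beta> A =
     (\<Sum>\<sigma>\<in>A \<inter> Xm N (n_part D N \<beta>). exp (- \<beta> * Ham U N \<sigma>))
     / (\<Sum>\<sigma>\<in>Xm N (n_part D N \<beta>). exp (- \<beta> * Ham U N \<sigma>))"

definition Sset :: "real \<Rightarrow> real \<Rightarrow> nat \<Rightarrow> nat \<Rightarrow> real \<Rightarrow> config set" where
  "Sset U D N L \<beta> = {\<sigma> \<in> Xm N (n_part D N \<beta>).
      \<forall>x\<in>Lam N. card (supp N \<sigma> \<inter> box N L x) \<le> ell_c U D * (ell_c U D - 1) + 1}"

definition Scheck0 :: "real \<Rightarrow> real \<Rightarrow> nat \<Rightarrow> nat \<Rightarrow> real \<Rightarrow> config set" where
  "Scheck0 U D N L \<beta> = {\<sigma> \<in> Sset U D N L \<beta>. supp N \<sigma> \<inter> box N L (0, 0) = {}}"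

end

theory Submission
  imports Defs
begin

(* Let S be the set of configurations with at most l_c(l_c-1)+1 particles in
   every box of side L, let C be the subset of S with no particle in the box B around the
   origin, and let Z_A denote the Boltzmann weight of a set A.  Since mu(C)/mu(S) = Z_C/Z_S,
   it suffices to show 1 - E <= Z_C/Z_S <= 1 with an error E -> 0.

   1. Torus translations act bijectively on the sites, preserve nearest-neighbour pairs and
      map boxes to boxes; hence they preserve the Hamiltonian, the particle number and S.
   2. Averaging: for a translation-closed set A of n-particle configurations and a
      translation-invariant weight w, the expected occupation of a site y, weighted by w,
      is the same for every y, hence equals n/|Lambda| times Z_A.  Summing over y in B gives
      Z_A - Z_{A avoiding B} <= |B| n / |Lambda| Z_A.
   3. With |B| <= L^2, n <= rho |Lambda| + 1 and L^2 rho = exp(-beta delta) this error is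
      at most eps + eps/(rho |Lambda|), which tends to 0.
   4. S is nonempty once n <= (N div L)^2: particles on a grid of mesh L never share a box.
      This holds for large beta, so the ratio is well defined and the sandwich argument
      concludes. *)

section \<open>Coordinates on the torus\<close>

definition wrap :: "nat \<Rightarrow> int \<Rightarrow> int" where
  "wrap N a = (a + half N) mod int N - half N"

lemma odd_half: "odd N \<Longrightarrow> int N = 2 * half N + 1 \<and> half N \<ge> 0"
  unfolding half_def by (auto elim!: oddE)

lemma Lam_iff:
  "x \<in> Lam N \<longleftrightarrow> - half N \<le> fst x \<and> fst x \<le> half N \<and> - half N \<le> snd x \<and> snd x \<le> half N"
  unfolding Lam_def by (cases x) auto

lemma finite_Lam: "finite (Lam N)"
  unfolding Lam_def by simp

lemma zero_Lam: "odd N \<Longrightarrow> (0, 0) \<in> Lam N"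
  using odd_half[of N] unfolding Lam_iff by auto

lemma card_Lam: assumes "odd N" shows "card (Lam N) = N ^ 2"
proof -
  have h: "int N = 2 * half N + 1" "half N \<ge> 0" using odd_half[OF assms] by auto
  have "card (Lam N) = nat (2 * half N + 1) * nat (2 * half N + 1)"
    unfolding Lam_def by (simp add: card_cartesian_product)
  also have "\<dots> = N * N" using h by (metis nat_int)
  finally show ?thesis by (simp add: power2_eq_square)
qed

lemma wrap_range: assumes "odd N" shows "- half N \<le> wrap N a \<and> wrap N a \<le> half N"
proof -
  have h: "int N = 2 * half N + 1" "half N \<ge> 0" using odd_half[OF assms] by auto
  have "int N > 0" using h by linarith
  hence "0 \<le> (a + half N) mod int N" "(a + half N) mod int N < int N" by simp_all
  thus ?thesis unfolding wrap_def using h by linarith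
qed

lemma wrap_mod: "wrap N a mod int N = a mod int N"
  unfolding wrap_def by (simp add: mod_diff_left_eq)

lemma wrap_id: assumes "odd N" "- half N \<le> a" "a \<le> half N" shows "wrap N a = a"
proof -
  have h: "int N = 2 * half N + 1" "half N \<ge> 0" using odd_half[OF assms(1)] by auto
  have "(a + half N) mod int N = a + half N" using h assms by (intro mod_pos_pos_trivial) auto
  thus ?thesis unfolding wrap_def by simp
qed

lemma wrap_cong: assumes "a mod int N = b mod int N" shows "wrap N a = wrap N b"
proof -
  have "(a + half N) mod int N = (a mod int N + half N) mod int N" by (simp add: mod_add_left_eq)
  also have "\<dots> = (b + half N) mod int N" using assms by (simp add: mod_add_left_eq)
  finally show ?thesis unfolding wrap_def by simp
qed

lemma window_mod_inj:
  assumes "odd N" "- half N \<le> a" "a \<le> half N" "- half N \<le> b" "b \<le> half N"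
    and "a mod int N = b mod int N"
  shows "a = b"
  using wrap_id[OF assms(1-3)] wrap_id[OF assms(1,4,5)] wrap_cong[OF assms(6)] by linarith

lemma wrap_diff: "(wrap N a - wrap N b) mod int N = (a - b) mod int N"
proof -
  have "(wrap N a - wrap N b) mod int N = (wrap N a mod int N - wrap N b mod int N) mod int N"
    by (simp add: mod_diff_eq)
  also have "\<dots> = (a mod int N - b mod int N) mod int N" by (simp only: wrap_mod)
  also have "\<dots> = (a - b) mod int N" by (simp add: mod_diff_eq)
  finally show ?thesis .
qed

section \<open>Translations of the torus\<close>

definition sh :: "nat \<Rightarrow> int \<Rightarrow> int \<Rightarrow> site \<Rightarrow> site" where
  "sh N c d x = (wrap N (fst x + c), wrap N (snd x + d))"

lemma sh_Lam: "odd N \<Longrightarrow> sh N c d x \<in> Lam N"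
  unfolding Lam_iff sh_def using wrap_range by auto

text \<open>Translations preserve coordinate differences modulo \<open>N\<close>; every torus notion used
  below (equality, adjacency, periodic distance) is a function of these differences.\<close>
lemma sh_fst_diff: "(fst (sh N c d u) - fst (sh N c d v)) mod int N = (fst u - fst v) mod int N"
  unfolding sh_def by (simp add: wrap_diff)

lemma sh_snd_diff: "(snd (sh N c d u) - snd (sh N c d v)) mod int N = (snd u - snd v) mod int N"
  unfolding sh_def by (simp add: wrap_diff)

lemma coord_eq_iff_diff:
  assumes "odd N" "- half N \<le> a" "a \<le> half N" "- half N \<le> b" "b \<le> half N"
  shows "a = b \<longleftrightarrow> (a - b) mod int N = 0"
  using window_mod_inj[OF assms] by (auto simp: mod_eq_dvd_iff dvd_eq_mod_eq_0)

lemma sh_fst_eq: assumes "odd N" "u \<in> Lam N" "v \<in> Lam N"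
  shows "fst (sh N c d u) = fst (sh N c d v) \<longleftrightarrow> fst u = fst v"
  using coord_eq_iff_diff[OF assms(1), of "fst (sh N c d u)" "fst (sh N c d v)"]
    coord_eq_iff_diff[OF assms(1), of "fst u" "fst v"] sh_Lam[OF assms(1)] assms(2,3)
  unfolding Lam_iff by (simp add: sh_fst_diff)

lemma sh_snd_eq: assumes "odd N" "u \<in> Lam N" "v \<in> Lam N"
  shows "snd (sh N c d u) = snd (sh N c d v) \<longleftrightarrow> snd u = snd v"
  using coord_eq_iff_diff[OF assms(1), of "snd (sh N c d u)" "snd (sh N c d v)"]
    coord_eq_iff_diff[OF assms(1), of "snd u" "snd v"] sh_Lam[OF assms(1)] assms(2,3)
  unfolding Lam_iff by (simp add: sh_snd_diff)

lemma sh_eq: assumes "odd N" "u \<in> Lam N" "v \<in> Lam N"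
  shows "sh N c d u = sh N c d v \<longleftrightarrow> u = v"
  using sh_fst_eq[OF assms, of c d] sh_snd_eq[OF assms, of c d] by (simp add: prod_eq_iff)

lemma sh_inj: "odd N \<Longrightarrow> inj_on (sh N c d) (Lam N)"
  unfolding inj_on_def using sh_eq by blast

lemma sh_inv: assumes "odd N" "x \<in> Lam N" shows "sh N (-c) (-d) (sh N c d x) = x"
proof -
  have wrap_back: "wrap N (wrap N (a + t) + - t) = a" if "- half N \<le> a" "a \<le> half N" for a t
  proof -
    have "(wrap N (a + t) + - t) mod int N = (wrap N (a + t) mod int N + - t) mod int N"
      by (simp add: mod_diff_left_eq)
    also have "\<dots> = a mod int N" by (simp add: wrap_mod mod_diff_left_eq)
    finally show ?thesis using wrap_cong wrap_id[OF assms(1) that] by metis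
  qed
  show ?thesis using assms(2) wrap_back unfolding sh_def Lam_iff by (simp add: prod_eq_iff)
qed

lemma sh_inv_neg: assumes "odd N" "x \<in> Lam N" shows "sh N c d (sh N (-c) (-d) x) = x"
  using sh_inv[OF assms, of "-c" "-d"] by simp

lemma sh_image_Lam: assumes "odd N" shows "sh N c d ` Lam N = Lam N"
proof
  show "sh N c d ` Lam N \<subseteq> Lam N" using sh_Lam[OF assms] by auto
  show "Lam N \<subseteq> sh N c d ` Lam N"
  proof
    fix x assume "x \<in> Lam N"
    hence "x = sh N c d (sh N (-c) (-d) x)" using sh_inv_neg[OF assms] by simp
    thus "x \<in> sh N c d ` Lam N" using sh_Lam[OF assms, of "-c" "-d" x] by blast
  qed
qed

lemma sh_origin: assumes "odd N" "y \<in> Lam N" shows "sh N (fst y) (snd y) (0, 0) = y"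
  using assms unfolding sh_def Lam_iff by (simp add: wrap_id prod_eq_iff)

lemma tadj_sh: assumes "odd N" "u \<in> Lam N" "v \<in> Lam N"
  shows "tadj N (sh N c d u) (sh N c d v) = tadj N u v"
  unfolding tadj_def cadj_def
  using sh_eq[OF assms, of c d] sh_fst_eq[OF assms, of c d] sh_snd_eq[OF assms, of c d]
    sh_fst_diff[of N c d u v] sh_fst_diff[of N c d v u]
    sh_snd_diff[of N c d u v] sh_snd_diff[of N c d v u]
  by simp

lemma nn_pairs_sh: assumes "odd N" shows "(\<lambda>p. sh N c d ` p) ` nn_pairs N = nn_pairs N"
proof
  show "(\<lambda>p. sh N c d ` p) ` nn_pairs N \<subseteq> nn_pairs N"
  proof
    fix q assume "q \<in> (\<lambda>p. sh N c d ` p) ` nn_pairs N"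
    then obtain x y where xy: "x \<in> Lam N" "y \<in> Lam N" "tadj N x y" "q = {sh N c d x, sh N c d y}"
      unfolding nn_pairs_def by auto
    thus "q \<in> nn_pairs N"
      using tadj_sh[OF assms xy(1,2)] sh_Lam[OF assms] unfolding nn_pairs_def by blast
  qed
  show "nn_pairs N \<subseteq> (\<lambda>p. sh N c d ` p) ` nn_pairs N"
  proof
    fix q assume "q \<in> nn_pairs N"
    then obtain x y where xy: "x \<in> Lam N" "y \<in> Lam N" "tadj N x y" "q = {x, y}"
      unfolding nn_pairs_def by blast
    let ?x = "sh N (-c) (-d) x" and ?y = "sh N (-c) (-d) y"
    have L: "?x \<in> Lam N" "?y \<in> Lam N" using sh_Lam[OF assms] by auto
    have moved_back: "sh N c d ?x = x" "sh N c d ?y = y" using sh_inv_neg[OF assms] xy by auto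
    have "tadj N ?x ?y" using tadj_sh[OF assms L, of c d] moved_back xy(3) by simp
    hence "{?x, ?y} \<in> nn_pairs N" using L unfolding nn_pairs_def by blast
    moreover have "q = sh N c d ` {?x, ?y}" using moved_back xy(4) by auto
    ultimately show "q \<in> (\<lambda>p. sh N c d ` p) ` nn_pairs N" by blast
  qed
qed

lemma nn_sub: "p \<in> nn_pairs N \<Longrightarrow> p \<subseteq> Lam N"
  unfolding nn_pairs_def by auto

lemma tdist_sh_fst: "tdist N (fst (sh N c d u)) (fst (sh N c d v)) = tdist N (fst u) (fst v)"
  unfolding tdist_def using sh_fst_diff[of N c d u v] sh_fst_diff[of N c d v u] by simp

lemma tdist_sh_snd: "tdist N (snd (sh N c d u)) (snd (sh N c d v)) = tdist N (snd u) (snd v)"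
  unfolding tdist_def using sh_snd_diff[of N c d u v] sh_snd_diff[of N c d v u] by simp

lemma box_sub: "box N L x \<subseteq> Lam N"
  unfolding box_def by auto

lemma box_sh: assumes "odd N" shows "box N L (sh N c d x) = sh N c d ` box N L x"
proof
  show "sh N c d ` box N L x \<subseteq> box N L (sh N c d x)"
  proof
    fix w assume "w \<in> sh N c d ` box N L x"
    then obtain z where z: "z \<in> box N L x" "w = sh N c d z" by blast
    show "w \<in> box N L (sh N c d x)" using z sh_Lam[OF assms, of c d z]
      tdist_sh_fst[of N c d x z] tdist_sh_snd[of N c d x z] unfolding box_def by simp
  qed
  show "box N L (sh N c d x) \<subseteq> sh N c d ` box N L x"
  proof
    fix w assume w: "w \<in> box N L (sh N c d x)"
    define z where "z = sh N (-c) (-d) w"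
    have zw: "sh N c d z = w" unfolding z_def using sh_inv_neg[OF assms] w box_sub by blast
    have "z \<in> box N L x"
      using w sh_Lam[OF assms, of "-c" "-d" w] tdist_sh_fst[of N c d x z] tdist_sh_snd[of N c d x z]
      unfolding box_def z_def[symmetric] zw by simp
    thus "w \<in> sh N c d ` box N L x" using zw by blast
  qed
qed

lemma Xm_values: "\<sigma> \<in> Xm N m \<Longrightarrow> \<sigma> x \<in> {0, 1}"
  unfolding Xm_def by blast

lemma Xm_outside: "\<sigma> \<in> Xm N m \<Longrightarrow> x \<notin> Lam N \<Longrightarrow> \<sigma> x = 0"
  unfolding Xm_def by blast

definition tr :: "nat \<Rightarrow> int \<Rightarrow> int \<Rightarrow> config \<Rightarrow> config" where
  "tr N c d \<sigma> = (\<lambda>x. if x \<in> Lam N then \<sigma> (sh N c d x) else 0)"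

lemma supp_tr: "odd N \<Longrightarrow> supp N (tr N c d \<sigma>) = Lam N \<inter> sh N c d -` supp N \<sigma>"
  unfolding supp_def tr_def using sh_Lam by auto

lemma card_supp_tr_Int: assumes "odd N" "A \<subseteq> Lam N"
  shows "card (supp N (tr N c d \<sigma>) \<inter> A) = card (supp N \<sigma> \<inter> sh N c d ` A)"
proof -
  have inj: "inj_on (sh N c d) (supp N (tr N c d \<sigma>) \<inter> A)"
    using inj_on_subset[OF sh_inj[OF assms(1)]] assms(2) by blast
  have "sh N c d ` (supp N (tr N c d \<sigma>) \<inter> A) = supp N \<sigma> \<inter> sh N c d ` A"
    unfolding supp_tr[OF assms(1)] using assms(2) by (auto simp del: vimage_eq simp add: vimage_def)
  thus ?thesis using card_image[OF inj] by simp
qed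

lemma tr_Xm: assumes "odd N" "\<sigma> \<in> Xm N m" shows "tr N c d \<sigma> \<in> Xm N m"
proof -
  have "card (supp N (tr N c d \<sigma>)) = card (supp N (tr N c d \<sigma>) \<inter> Lam N)"
    unfolding supp_def by (simp add: Int_absorb2)
  also have "\<dots> = card (supp N \<sigma> \<inter> Lam N)"
    using card_supp_tr_Int[OF assms(1), of "Lam N"] sh_image_Lam[OF assms(1)] by simp
  also have "\<dots> = m" using assms(2) unfolding Xm_def supp_def by (simp add: Int_absorb2)
  finally have "card (supp N (tr N c d \<sigma>)) = m" .
  moreover have "tr N c d \<sigma> x \<in> {0, 1}" for x
    using Xm_values[OF assms(2)] unfolding tr_def by simp
  ultimately show ?thesis unfolding Xm_def tr_def by auto
qed

lemma tr_inv: assumes "odd N" "\<sigma> \<in> Xm N m" shows "tr N (-c) (-d) (tr N c d \<sigma>) = \<sigma>"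
proof
  fix x show "tr N (-c) (-d) (tr N c d \<sigma>) x = \<sigma> x"
  proof (cases "x \<in> Lam N")
    case True thus ?thesis unfolding tr_def using sh_Lam[OF assms(1)] sh_inv_neg[OF assms(1) True] by simp
  next
    case False thus ?thesis using Xm_outside[OF assms(2)] unfolding tr_def by simp
  qed
qed

lemma tr_bij:
  assumes "odd N" "A \<subseteq> Xm N m" "\<And>c d. tr N c d ` A \<subseteq> A"
  shows "bij_betw (tr N c d) A A"
proof (rule bij_betw_byWitness[where f' = "tr N (-c) (-d)"])
  show "\<forall>\<sigma>\<in>A. tr N (-c) (-d) (tr N c d \<sigma>) = \<sigma>" using tr_inv[OF assms(1)] assms(2) by blast
  show "\<forall>\<sigma>\<in>A. tr N c d (tr N (-c) (-d) \<sigma>) = \<sigma>"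
    using tr_inv[OF assms(1), of _ m "-c" "-d"] assms(2) by force
qed (use assms(3) in auto)

lemma Ham_tr: assumes "odd N" shows "Ham U N (tr N c d \<sigma>) = Ham U N \<sigma>"
proof -
  let ?g = "\<lambda>q. \<Prod>x\<in>q. real (\<sigma> x)" and ?s = "\<lambda>p. sh N c d ` p"
  have inj: "inj_on ?s (nn_pairs N)"
    using inj_on_image_eq_iff[OF sh_inj[OF assms] nn_sub nn_sub] unfolding inj_on_def by blast
  have "(\<Prod>x\<in>p. real (tr N c d \<sigma> x)) = ?g (?s p)" if p: "p \<in> nn_pairs N" for p
  proof -
    have "inj_on (sh N c d) p" using sh_inj[OF assms] nn_sub[OF p] inj_on_subset by blast
    moreover have "(\<Prod>x\<in>p. real (tr N c d \<sigma> x)) = (\<Prod>x\<in>p. real (\<sigma> (sh N c d x)))"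
      using nn_sub[OF p] unfolding tr_def by (intro prod.cong) auto
    ultimately show ?thesis by (simp add: prod.reindex)
  qed
  hence "(\<Sum>p\<in>nn_pairs N. \<Prod>x\<in>p. real (tr N c d \<sigma> x)) = (\<Sum>p\<in>nn_pairs N. ?g (?s p))"
    by (rule sum.cong[OF refl])
  also have "\<dots> = sum ?g (?s ` nn_pairs N)" by (simp add: sum.reindex[OF inj])
  also have "\<dots> = sum ?g (nn_pairs N)" using nn_pairs_sh[OF assms] by simp
  finally show ?thesis unfolding Ham_def by simp
qed

lemma tr_Sset: assumes "odd N" "\<sigma> \<in> Sset U D N L \<beta>" shows "tr N c d \<sigma> \<in> Sset U D N L \<beta>"
proof -
  have "card (supp N (tr N c d \<sigma>) \<inter> box N L x) \<le> ell_c U D * (ell_c U D - 1) + 1"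
    if "x \<in> Lam N" for x
  proof -
    have "card (supp N (tr N c d \<sigma>) \<inter> box N L x) = card (supp N \<sigma> \<inter> box N L (sh N c d x))"
      using card_supp_tr_Int[OF assms(1) box_sub] box_sh[OF assms(1)] by simp
    thus ?thesis using assms(2) sh_Lam[OF assms(1)] unfolding Sset_def by auto
  qed
  thus ?thesis using tr_Xm[OF assms(1)] assms(2) unfolding Sset_def by auto
qed

section \<open>Averaging over translations\<close>

lemma finite_Xm: "finite (Xm N m)"
proof (rule finite_subset)
  show "Xm N m \<subseteq> {f. \<forall>x. (x \<in> Lam N \<longrightarrow> f x \<in> {0,1}) \<and> (x \<notin> Lam N \<longrightarrow> f x = 0)}"
    unfolding Xm_def by blast
  show "finite {f. \<forall>x. (x \<in> Lam N \<longrightarrow> f x \<in> {0,1::nat}) \<and> (x \<notin> Lam N \<longrightarrow> f x = 0)}"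
    by (rule finite_set_of_finite_funs) (simp_all add: finite_Lam)
qed

lemma sum_occupation: assumes "\<sigma> \<in> Xm N m" shows "(\<Sum>y\<in>Lam N. real (\<sigma> y)) = real m"
proof -
  have "(\<Sum>y\<in>Lam N. real (\<sigma> y)) = (\<Sum>y\<in>Lam N. if \<sigma> y = 1 then 1 else 0)"
    using assms unfolding Xm_def by (intro sum.cong) auto
  also have "\<dots> = real (card (supp N \<sigma>))"
    unfolding supp_def by (simp add: sum.If_cases[OF finite_Lam] Int_def)
  finally show ?thesis using assms unfolding Xm_def by simp
qed

lemma weighted_occupation:
  fixes w :: "config \<Rightarrow> real"
  assumes N: "odd N" and A: "A \<subseteq> Xm N m" "\<And>c d. tr N c d ` A \<subseteq> A"
    and w: "\<And>c d \<sigma>. w (tr N c d \<sigma>) = w \<sigma>" and y: "y \<in> Lam N"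
  shows "real (card (Lam N)) * (\<Sum>\<sigma>\<in>A. w \<sigma> * real (\<sigma> y)) = real m * (\<Sum>\<sigma>\<in>A. w \<sigma>)"
proof -
  define F where "F y = (\<Sum>\<sigma>\<in>A. w \<sigma> * real (\<sigma> y))" for y
  have Fc: "F y = F (0, 0)" if "y \<in> Lam N" for y
  proof -
    let ?t = "tr N (fst y) (snd y)"
    have "F (0, 0) = (\<Sum>\<sigma>\<in>A. w (?t \<sigma>) * real (?t \<sigma> (0, 0)))"
      unfolding F_def
      using sum.reindex_bij_betw[OF tr_bij[OF N A], of "\<lambda>\<sigma>. w \<sigma> * real (\<sigma> (0, 0))"] by simp
    also have "\<dots> = F y"
    proof -
      have "?t \<sigma> (0, 0) = \<sigma> y" for \<sigma>
        unfolding tr_def using sh_origin[OF N that] zero_Lam[OF N] by simp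
      thus ?thesis unfolding F_def using w by simp
    qed
    finally show ?thesis by simp
  qed
  have "(\<Sum>y\<in>Lam N. F y) = (\<Sum>\<sigma>\<in>A. w \<sigma> * (\<Sum>y\<in>Lam N. real (\<sigma> y)))"
    unfolding F_def by (simp add: sum.swap[of _ "Lam N"] sum_distrib_left)
  also have "\<dots> = (\<Sum>\<sigma>\<in>A. w \<sigma> * real m)"
    using A(1) sum_occupation by (intro sum.cong) auto
  also have "\<dots> = real m * (\<Sum>\<sigma>\<in>A. w \<sigma>)" by (simp add: sum_distrib_left mult.commute)
  finally show ?thesis using Fc y unfolding F_def[symmetric] by simp
qed

text \<open>Consequence: the weight of configurations in \<open>A\<close> that meet a region \<open>B\<close> is at most
  \<open>|B| m / |Lam|\<close> times the total weight (union bound over the sites of \<open>B\<close>).\<close>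
lemma weight_meeting_region:
  fixes w :: "config \<Rightarrow> real"
  assumes N: "odd N" and A: "A \<subseteq> Xm N m" "\<And>c d. tr N c d ` A \<subseteq> A"
    and w: "\<And>c d \<sigma>. w (tr N c d \<sigma>) = w \<sigma>" "\<And>\<sigma>. w \<sigma> \<ge> 0" and B: "B \<subseteq> Lam N"
  shows "(\<Sum>\<sigma>\<in>A. w \<sigma>) - (\<Sum>\<sigma>\<in>{\<sigma>\<in>A. supp N \<sigma> \<inter> B = {}}. w \<sigma>)
           \<le> real (card B) * real m / real (card (Lam N)) * (\<Sum>\<sigma>\<in>A. w \<sigma>)"
proof -
  define C where "C = {\<sigma>\<in>A. supp N \<sigma> \<inter> B = {}}"
  have fA: "finite A" using finite_subset[OF A(1) finite_Xm] .
  have fB: "finite B" using finite_subset[OF B finite_Lam] .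
  have cL: "real (card (Lam N)) > 0" using zero_Lam[OF N] finite_Lam card_gt_0_iff by auto
  have "(\<Sum>\<sigma>\<in>A. w \<sigma>) - (\<Sum>\<sigma>\<in>C. w \<sigma>) = (\<Sum>\<sigma>\<in>A - C. w \<sigma>)"
    using sum_diff[OF fA, of C w] unfolding C_def by auto
  also have "\<dots> \<le> (\<Sum>\<sigma>\<in>A - C. w \<sigma> * (\<Sum>y\<in>B. real (\<sigma> y)))"
  proof (rule sum_mono)
    fix \<sigma> assume "\<sigma> \<in> A - C"
    then obtain y where y: "y \<in> B" "\<sigma> y = 1" unfolding C_def supp_def by blast
    have "1 \<le> (\<Sum>y\<in>B. real (\<sigma> y))" using member_le_sum[OF y(1) _ fB, of "\<lambda>y. real (\<sigma> y)"] y by simp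
    thus "w \<sigma> \<le> w \<sigma> * (\<Sum>y\<in>B. real (\<sigma> y))" using w(2)[of \<sigma>] by (simp add: mult_le_cancel_left1)
  qed
  also have "\<dots> \<le> (\<Sum>\<sigma>\<in>A. w \<sigma> * (\<Sum>y\<in>B. real (\<sigma> y)))"
    by (rule sum_mono2[OF fA]) (auto intro!: mult_nonneg_nonneg sum_nonneg w(2))
  also have "\<dots> = (\<Sum>y\<in>B. \<Sum>\<sigma>\<in>A. w \<sigma> * real (\<sigma> y))"
    by (simp add: sum.swap[of _ B] sum_distrib_left)
  also have "\<dots> = (\<Sum>y\<in>B. real m * (\<Sum>\<sigma>\<in>A. w \<sigma>) / real (card (Lam N)))"
    using weighted_occupation[OF N A w(1)] B cL by (intro sum.cong) (auto simp: field_simps)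
  finally show ?thesis unfolding C_def by simp
qed

text \<open>A box of side \<open>L\<close> around the origin contains at most \<open>L^2\<close> sites: periodic
  distance to \<open>0\<close> dominates the absolute value of a window coordinate.\<close>
lemma mod_of_neg: assumes "- int N \<le> a" "a < 0" shows "a mod int N = a + int N"
  using assms mod_pos_pos_trivial[of "a + int N" "int N"] by simp

lemma tdist0_ge: assumes "odd N" "- half N \<le> a" "a \<le> half N" shows "\<bar>a\<bar> \<le> tdist N 0 a"
proof -
  have h: "int N = 2 * half N + 1" "half N \<ge> 0" using odd_half[OF assms(1)] by auto
  have "\<bar>a\<bar> \<le> b mod int N" if "b = a \<or> b = - a" for b
  proof (cases "b < 0")
    case True thus ?thesis using mod_of_neg[of N b] h that assms by linarith
  next
    case False thus ?thesis using h that assms by (subst mod_pos_pos_trivial) auto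
  qed
  thus ?thesis unfolding tdist_def by simp
qed

lemma card_box0: assumes "odd N" "odd L" shows "card (box N L (0, 0)) \<le> L ^ 2"
proof -
  define r where "r = (int L - 1) div 2"
  have r: "2 * r + 1 = int L" "r \<ge> 0" unfolding r_def using assms(2) by (auto elim!: oddE)
  have "box N L (0, 0) \<subseteq> {-r..r} \<times> {-r..r}"
  proof
    fix y assume y: "y \<in> box N L (0, 0)"
    have "\<bar>fst y\<bar> \<le> r" "\<bar>snd y\<bar> \<le> r"
      using y tdist0_ge[OF assms(1), of "fst y"] tdist0_ge[OF assms(1), of "snd y"]
      unfolding box_def r_def Lam_iff by auto
    thus "y \<in> {-r..r} \<times> {-r..r}" by (cases y) auto
  qed
  hence "card (box N L (0, 0)) \<le> card ({-r..r} \<times> {-r..r})" by (intro card_mono) auto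
  also have "\<dots> = L ^ 2" using r by (simp add: card_cartesian_product power2_eq_square)
  finally show ?thesis .
qed

section \<open>A configuration respecting the box constraint\<close>

lemma tdist_le_lift: assumes "N > 0" "tdist N a b \<le> t" shows "\<exists>k. \<bar>a - b - k * int N\<bar> \<le> t"
proof -
  have "(a - b) mod int N \<le> t \<or> (b - a) mod int N \<le> t" using assms(2) unfolding tdist_def by linarith
  thus ?thesis
  proof
    assume "(a - b) mod int N \<le> t"
    moreover have "a - b - (a - b) div int N * int N = (a - b) mod int N" by (rule minus_div_mult_eq_mod)
    moreover have "(a - b) mod int N \<ge> 0" using assms(1) by simp
    ultimately show ?thesis by (intro exI[of _ "(a - b) div int N"]) simp
  next
    assume "(b - a) mod int N \<le> t"
    moreover have "b - a - (b - a) div int N * int N = (b - a) mod int N" by (rule minus_div_mult_eq_mod)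
    moreover have "(b - a) mod int N \<ge> 0" using assms(1) by simp
    ultimately show ?thesis by (intro exI[of _ "- ((b - a) div int N)"]) simp
  qed
qed

lemma far_from_multiples: fixes d k n l :: int
  assumes "l \<le> \<bar>d\<bar>" "\<bar>d\<bar> \<le> n - l" "l > 0"
  shows "l \<le> \<bar>d - k * n\<bar>"
proof -
  have n: "n > 0" using assms by linarith
  consider "k = 0" | "k \<ge> 1" | "k \<le> -1" by linarith
  thus ?thesis
  proof cases
    case 2 hence "k * n \<ge> 1 * n" using n by (intro mult_right_mono) auto
    thus ?thesis using assms by linarith
  next
    case 3 hence "k * n \<le> (-1) * n" using n by (intro mult_right_mono) auto
    thus ?thesis using assms by linarith
  qed (use assms in simp)
qed

lemma grid_coords_separated: fixes i i' :: nat
  assumes N: "odd N" and L: "odd L" and i: "i < N div L" "i' < N div L" "i \<noteq> i'"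
    and near: "tdist N x (- half N + int i * int L) \<le> (int L - 1) div 2"
      "tdist N x (- half N + int i' * int L) \<le> (int L - 1) div 2"
  shows False
proof -
  define K where "K = int (N div L)"
  define m where "m = int i' - int i"
  have L0: "int L > 0" using L by (auto elim!: oddE)
  have KL: "K * int L \<le> int N" unfolding K_def
    by (metis div_times_less_eq_dividend of_nat_le_iff of_nat_mult)
  have m: "1 \<le> \<bar>m\<bar>" "\<bar>m\<bar> \<le> K - 1" using i unfolding m_def K_def by auto
  have "1 * int L \<le> \<bar>m\<bar> * int L" "\<bar>m\<bar> * int L \<le> (K - 1) * int L"
    using m L0 by (intro mult_right_mono; simp)+
  hence far: "int L \<le> \<bar>m * int L - k * int N\<bar>" for k
    using KL L0 by (intro far_from_multiples) (auto simp: abs_mult algebra_simps)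
  have N0: "N > 0" using N by (auto elim!: oddE)
  obtain k1 k2 where "\<bar>x - (- half N + int i * int L) - k1 * int N\<bar> \<le> (int L - 1) div 2"
    "\<bar>x - (- half N + int i' * int L) - k2 * int N\<bar> \<le> (int L - 1) div 2"
    using tdist_le_lift[OF N0 near(1)] tdist_le_lift[OF N0 near(2)] by blast
  moreover have "2 * ((int L - 1) div 2) \<le> int L - 1" by simp
  ultimately have "\<bar>m * int L - (k1 - k2) * int N\<bar> \<le> int L - 1"
    unfolding m_def by (simp add: algebra_simps)
  thus False using far[of "k1 - k2"] by linarith
qed

text \<open>If \<open>n \<le> (N div L)^2\<close>, placing the particles on a square grid of mesh \<open>L\<close> gives an
  \<open>n\<close>-particle configuration with at most one particle in every box of side \<open>L\<close>.\<close>
lemma sparse_configuration_exists: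
  assumes N: "odd N" and L: "odd L" and n: "n \<le> (N div L) ^ 2"
  shows "\<exists>\<sigma>\<in>Xm N n. \<forall>x. card (supp N \<sigma> \<inter> box N L x) \<le> 1"
proof -
  define K where "K = N div L"
  define g where "g = (\<lambda>(i, j). (- half N + int i * int L, - half N + int j * int L))"
  define G where "G = g ` ({..<K} \<times> {..<K})"
  have L0: "int L > 0" using L by (auto elim!: oddE)
  have hN: "int N = 2 * half N + 1" "half N \<ge> 0" using odd_half[OF N] by auto
  have KL: "int K * int L \<le> int N" unfolding K_def
    by (metis div_times_less_eq_dividend of_nat_le_iff of_nat_mult)
  have "inj_on g ({..<K} \<times> {..<K})"
    using L0 unfolding inj_on_def g_def by auto
  hence cG: "card G = K ^ 2" unfolding G_def
    by (simp add: card_image card_cartesian_product power2_eq_square)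
  have coord: "- half N \<le> - half N + int i * int L \<and> - half N + int i * int L \<le> half N"
    if "i < K" for i
  proof -
    have "int i * int L \<le> (int K - 1) * int L" using that L0 by (intro mult_right_mono) auto
    thus ?thesis using KL L0 hN by (simp add: algebra_simps)
  qed
  have GL: "G \<subseteq> Lam N"
  proof
    fix p assume "p \<in> G"
    then obtain i j where "i < K" "j < K" "p = g (i, j)" unfolding G_def by blast
    thus "p \<in> Lam N" unfolding Lam_iff g_def using coord by simp
  qed
  obtain T where T: "T \<subseteq> G" "card T = n" "finite T"
    using obtain_subset_with_card_n[of n G] n cG K_def by auto
  define \<sigma> where "\<sigma> = (\<lambda>x. if x \<in> T then 1 else 0 :: nat)"
  have supp: "supp N \<sigma> = T" unfolding supp_def \<sigma>_def using T(1) GL by auto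
  have X: "\<sigma> \<in> Xm N n" unfolding Xm_def using supp T GL unfolding \<sigma>_def by auto
  have "\<forall>a1\<in>T \<inter> box N L x. \<forall>a2\<in>T \<inter> box N L x. a1 = a2" for x
  proof (intro ballI, rule ccontr)
    fix a1 a2 assume a: "a1 \<in> T \<inter> box N L x" "a2 \<in> T \<inter> box N L x" and ne: "a1 \<noteq> a2"
    obtain i j i' j' where ij: "i < K" "j < K" "a1 = g (i, j)" "i' < K" "j' < K" "a2 = g (i', j')"
      using a T(1) unfolding G_def by blast
    have "i \<noteq> i' \<or> j \<noteq> j'" using ne ij by auto
    thus False
      using grid_coords_separated[OF N L, of i i' "fst x"] grid_coords_separated[OF N L, of j j' "snd x"]
        a ij unfolding box_def g_def K_def by auto
  qed
  hence "card (T \<inter> box N L x) \<le> 1" for x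
    using card_le_Suc0_iff_eq[of "T \<inter> box N L x"] T(3) by simp
  hence "card (supp N \<sigma> \<inter> box N L x) \<le> 1" for x using supp by simp
  thus ?thesis using X by blast
qed

text \<open>In particular \<open>Sset\<close> is nonempty, since its box bound \<open>l_c (l_c - 1) + 1\<close> is at least 1.\<close>
lemma Sset_nonempty:
  assumes "odd N" "odd L" "n_part D N \<beta> \<le> (N div L) ^ 2"
  shows "Sset U D N L \<beta> \<noteq> {}"
proof -
  obtain \<sigma> where "\<sigma> \<in> Xm N (n_part D N \<beta>)" "\<forall>x. card (supp N \<sigma> \<inter> box N L x) \<le> 1"
    using sparse_configuration_exists[OF assms] by blast
  hence "\<sigma> \<in> Sset U D N L \<beta>" unfolding Sset_def by (auto intro: le_trans)
  thus ?thesis by blast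
qed

lemma n_part_le: "real (n_part D N \<beta>) \<le> exp (- \<beta> * D) * real (card (Lam N)) + 1"
proof -
  have "real (n_part D N \<beta>) = real_of_int \<lceil>exp (- \<beta> * D) * real (card (Lam N))\<rceil>"
    unfolding n_part_def by simp
  thus ?thesis by linarith
qed

lemma grid_has_room:
  fixes N L K \<rho> n :: real
  assumes "L > 0" "N \<ge> 0" "K \<ge> 0" "N < (K + 1) * L" "\<rho> > 0" "L^2 * \<rho> \<le> 1/4"
    and "\<rho> * N^2 \<ge> 64" "n \<le> \<rho> * N^2 + 1"
  shows "n \<le> K ^ 2"
proof -
  have "\<rho> * N^2 \<le> \<rho> * ((K + 1) * L)^2"
    using assms by (intro mult_left_mono power_mono) auto
  also have "\<dots> = (L^2 * \<rho>) * (K + 1)^2" by (simp add: power_mult_distrib)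
  also have "\<dots> \<le> 1/4 * (K + 1)^2" using assms(6) by (intro mult_right_mono) auto
  finally have b: "\<rho> * N^2 \<le> 1/4 * (K + 1)^2" .
  have "K \<ge> 15"
  proof (rule ccontr)
    assume "\<not> K \<ge> 15"
    hence "(K + 1)^2 < 16^2" using assms(3) by (intro power_strict_mono) auto
    thus False using b assms(7) by simp
  qed
  hence "0 \<le> (3 * K - 5) * (K + 1)" by (intro mult_nonneg_nonneg) auto
  hence "1/4 * (K + 1)^2 + 1 \<le> K^2" by (simp add: power2_eq_square algebra_simps)
  thus ?thesis using b assms(8) by linarith
qed

lemma Sset_nonempty_if_dilute:
  assumes N: "odd N" and L: "odd L"
    and e: "real L ^ 2 * exp (- \<beta> * D) \<le> 1/4"
    and r: "real (card (Lam N)) * exp (- \<beta> * D) \<ge> 64"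
  shows "Sset U D N L \<beta> \<noteq> {}"
proof -
  define K where "K = N div L"
  have L0: "real L > 0" using L by (auto elim!: oddE)
  have "N < (K + 1) * L" unfolding K_def using L0
    by (metis add.commute dividend_less_div_times mult_Suc of_nat_0_less_iff plus_1_eq_Suc)
  hence KN: "real N < (real K + 1) * real L" by (metis of_nat_1 of_nat_add of_nat_less_iff of_nat_mult)
  define \<rho> where "\<rho> = exp (- \<beta> * D)"
  have \<Lambda>: "real (card (Lam N)) = real N ^ 2" using card_Lam[OF N] by simp
  have "real (n_part D N \<beta>) \<le> \<rho> * real N ^ 2 + 1"
    using n_part_le[of D N \<beta>] unfolding \<rho>_def \<Lambda> .
  moreover have "\<rho> * real N ^ 2 \<ge> 64" using r unfolding \<rho>_def \<Lambda> by (simp add: mult.commute)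
  ultimately have "real (n_part D N \<beta>) \<le> real K ^ 2"
    by (intro grid_has_room[OF L0 _ _ KN, of \<rho>]) (use e in \<open>simp_all add: \<rho>_def\<close>)
  hence "n_part D N \<beta> \<le> (N div L) ^ 2" unfolding K_def by (metis of_nat_le_iff of_nat_power)
  thus ?thesis using Sset_nonempty[OF N L] by blast
qed

lemma Scheck0_weight_deficit:
  fixes U D \<beta> :: real and N L :: nat
  assumes N: "odd N"
  defines "w \<equiv> \<lambda>\<sigma>. exp (- \<beta> * Ham U N \<sigma>)"
  shows "(\<Sum>\<sigma>\<in>Sset U D N L \<beta>. w \<sigma>) - (\<Sum>\<sigma>\<in>Scheck0 U D N L \<beta>. w \<sigma>)
     \<le> real (card (box N L (0, 0))) * real (n_part D N \<beta>) / real (card (Lam N))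
        * (\<Sum>\<sigma>\<in>Sset U D N L \<beta>. w \<sigma>)"
proof -
  have "Sset U D N L \<beta> \<subseteq> Xm N (n_part D N \<beta>)" unfolding Sset_def by auto
  moreover have "tr N c d ` Sset U D N L \<beta> \<subseteq> Sset U D N L \<beta>" for c d
    using tr_Sset[OF N] by blast
  moreover have "w (tr N c d \<sigma>) = w \<sigma>" for c d \<sigma> unfolding w_def by (simp add: Ham_tr[OF N])
  moreover have "Scheck0 U D N L \<beta> = {\<sigma> \<in> Sset U D N L \<beta>. supp N \<sigma> \<inter> box N L (0, 0) = {}}"
    unfolding Scheck0_def ..
  ultimately show ?thesis
    using weight_meeting_region[OF N _ _ _ _ box_sub, of "Sset U D N L \<beta>" "n_part D N \<beta>" w]
    unfolding w_def by simp
qed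

lemma ratio_bounds:
  fixes U D \<beta> :: real and N L :: nat
  assumes N: "odd N" and L: "odd L"
    and e: "real L ^ 2 * exp (- \<beta> * D) \<le> 1/4"
    and r: "real (card (Lam N)) * exp (- \<beta> * D) \<ge> 64"
  defines "\<epsilon> \<equiv> real L ^ 2 * exp (- \<beta> * D)"
    and "q \<equiv> gibbs U D N \<beta> (Scheck0 U D N L \<beta>) / gibbs U D N \<beta> (Sset U D N L \<beta>)"
  shows "1 - (\<epsilon> + \<epsilon> / (real (card (Lam N)) * exp (- \<beta> * D))) \<le> q \<and> q \<le> 1"
proof -
  define w where "w = (\<lambda>\<sigma>. exp (- \<beta> * Ham U N \<sigma>))"
  define S where "S = Sset U D N L \<beta>"
  define C where "C = Scheck0 U D N L \<beta>"
  define X where "X = Xm N (n_part D N \<beta>)"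
  define \<rho> where "\<rho> = exp (- \<beta> * D)"
  define \<Lambda> where "\<Lambda> = real (card (Lam N))"
  have \<rho>0: "\<rho> > 0" unfolding \<rho>_def by simp
  have \<Lambda>0: "\<Lambda> > 0" using zero_Lam[OF N] finite_Lam card_gt_0_iff unfolding \<Lambda>_def by auto
  have CS: "C \<subseteq> S" and SX: "S \<subseteq> X" unfolding C_def S_def X_def Scheck0_def Sset_def by auto
  have fS: "finite S" using finite_subset[OF SX] finite_Xm unfolding X_def by blast
  have ZS: "(\<Sum>\<sigma>\<in>S. w \<sigma>) > 0"
    using Sset_nonempty_if_dilute[OF N L e r] fS unfolding S_def w_def by (intro sum_pos) auto
  have ZX: "(\<Sum>\<sigma>\<in>X. w \<sigma>) > 0"
    using ZS sum_mono2[OF _ SX, of w] finite_Xm unfolding X_def w_def by fastforce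
  have q: "q = (\<Sum>\<sigma>\<in>C. w \<sigma>) / (\<Sum>\<sigma>\<in>S. w \<sigma>)"
    using CS SX ZX unfolding q_def gibbs_def w_def S_def C_def X_def
    by (simp add: Int_absorb2)
  have "real (card (box N L (0, 0))) * real (n_part D N \<beta>) / \<Lambda> \<le> real L ^ 2 * (\<rho> * \<Lambda> + 1) / \<Lambda>"
    using card_box0[OF N L] n_part_le[of D N \<beta>] \<Lambda>0 unfolding \<rho>_def \<Lambda>_def
    by (intro divide_right_mono mult_mono) (auto simp: mult.commute simp flip: of_nat_power)
  also have "\<dots> = \<epsilon> + \<epsilon> / (\<Lambda> * \<rho>)" unfolding \<epsilon>_def \<rho>_def[symmetric] using \<Lambda>0 \<rho>0
    by (simp add: field_simps)
  finally have "(\<Sum>\<sigma>\<in>S. w \<sigma>) - (\<Sum>\<sigma>\<in>C. w \<sigma>) \<le> (\<epsilon> + \<epsilon> / (\<Lambda> * \<rho>)) * (\<Sum>\<sigma>\<in>S. w \<sigma>)"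
    using Scheck0_weight_deficit[OF N, of \<beta> U D L] ZS unfolding S_def C_def w_def \<Lambda>_def
    by (meson less_imp_le mult_right_mono order_trans)
  hence "1 - (\<epsilon> + \<epsilon> / (\<Lambda> * \<rho>)) \<le> (\<Sum>\<sigma>\<in>C. w \<sigma>) / (\<Sum>\<sigma>\<in>S. w \<sigma>)"
    using ZS by (simp add: field_simps)
  moreover have "(\<Sum>\<sigma>\<in>C. w \<sigma>) \<le> (\<Sum>\<sigma>\<in>S. w \<sigma>)"
    by (rule sum_mono2[OF fS CS]) (simp add: w_def)
  ultimately show ?thesis unfolding q \<Lambda>_def \<rho>_def using ZS by simp
qed

text \<open>With \<open>L^2 = e^{(D - \<delta>) \<beta>}\<close> the expected number of particles in a box of side \<open>L\<close>
  is \<open>L^2 e^{-\<beta> D} = e^{-\<beta> \<delta>}\<close>, which vanishes when \<open>\<beta> \<delta> \<rightarrow> \<infinity>\<close>.\<close>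
lemma box_density_vanishes:
  fixes L :: "real \<Rightarrow> nat" and \<delta> :: "real \<Rightarrow> real"
  assumes "\<forall>\<beta>. real (L \<beta>) ^ 2 = exp ((D - \<delta> \<beta>) * \<beta>)"
    and "filterlim (\<lambda>\<beta>. \<beta> * \<delta> \<beta>) at_top at_top"
  shows "((\<lambda>\<beta>. real (L \<beta>) ^ 2 * exp (- \<beta> * D)) \<longlongrightarrow> 0) at_top"
proof -
  have "real (L \<beta>) ^ 2 * exp (- \<beta> * D) = exp (- (\<beta> * \<delta> \<beta>))" for \<beta>
    using assms(1) by (simp add: exp_add[symmetric] algebra_simps)
  moreover have "filterlim (\<lambda>\<beta>. - (\<beta> * \<delta> \<beta>)) at_bot at_top"
    using filterlim_uminus_at_top[THEN iffD1, OF assms(2)] .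
  ultimately show ?thesis using filterlim_compose[OF exp_at_bot] by simp
qed

theorem lemmaB2:
  fixes U D :: real
    and N :: "real \<Rightarrow> nat" and L :: "real \<Rightarrow> nat" and \<delta> :: "real \<Rightarrow> real"
  assumes "U > 0" and "U < D" and "D < 2 * U"
    and "U / (2 * U - D) \<notin> \<nat>"
    and "\<forall>\<beta>. odd (N \<beta>)"
    and "filterlim (\<lambda>\<beta>. real (card (Lam (N \<beta>))) * exp (- \<beta> * D)) at_top at_top"
    and "((\<lambda>\<beta>. real (card (Lam (N \<beta>))) * exp (- \<beta> * Gamma U D)) \<longlongrightarrow> 0) at_top"
    and "\<forall>\<beta>. odd (L \<beta>) \<and> real (L \<beta>) ^ 2 = exp ((D - \<delta> \<beta>) * \<beta>)"
    and "(\<delta> \<longlongrightarrow> 0) at_top"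
    and "filterlim (\<lambda>\<beta>. \<beta> * \<delta> \<beta>) at_top at_top"
  shows "((\<lambda>\<beta>. gibbs U D (N \<beta>) \<beta> (Scheck0 U D (N \<beta>) (L \<beta>) \<beta>)
                / gibbs U D (N \<beta>) \<beta> (Sset U D (N \<beta>) (L \<beta>) \<beta>)) \<longlongrightarrow> 1) at_top"
proof -
  define \<epsilon> where "\<epsilon> \<beta> = real (L \<beta>) ^ 2 * exp (- \<beta> * D)" for \<beta>
  define R where "R \<beta> = real (card (Lam (N \<beta>))) * exp (- \<beta> * D)" for \<beta>
  define q where "q \<beta> = gibbs U D (N \<beta>) \<beta> (Scheck0 U D (N \<beta>) (L \<beta>) \<beta>)
                       / gibbs U D (N \<beta>) \<beta> (Sset U D (N \<beta>) (L \<beta>) \<beta>)" for \<beta>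
  have \<epsilon>: "(\<epsilon> \<longlongrightarrow> 0) at_top"
    unfolding \<epsilon>_def using box_density_vanishes assms(8,10) by blast
  have R: "filterlim R at_top at_top" unfolding R_def by (rule assms(6))
  have error: "((\<lambda>\<beta>. 1 - (\<epsilon> \<beta> + \<epsilon> \<beta> / R \<beta>)) \<longlongrightarrow> 1 - (0 + 0)) at_top"
    by (intro tendsto_intros \<epsilon> tendsto_divide_0[OF \<epsilon>] filterlim_at_top_imp_at_infinity[OF R])
  have "eventually (\<lambda>\<beta>. \<epsilon> \<beta> \<le> 1/4 \<and> 64 \<le> R \<beta>) at_top"
    using order_tendstoD(2)[OF \<epsilon>, of "1/4"] R unfolding filterlim_at_top
    by (auto elim: eventually_elim2)
  hence "eventually (\<lambda>\<beta>. 1 - (\<epsilon> \<beta> + \<epsilon> \<beta> / R \<beta>) \<le> q \<beta> \<and> q \<beta> \<le> 1) at_top"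
  proof eventually_elim
    case (elim \<beta>)
    have "odd (N \<beta>)" "odd (L \<beta>)" using assms(5,8) by auto
    thus ?case using ratio_bounds[of "N \<beta>" "L \<beta>" \<beta> D U] elim unfolding \<epsilon>_def R_def q_def by simp
  qed
  hence "(q \<longlongrightarrow> 1) at_top"
    using tendsto_sandwich[OF _ _ error[simplified] tendsto_const] eventually_conj_iff by blast
  thus ?thesis unfolding q_def .
qed

end
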